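(* Let $G$ be a connected graph with $12$ vertices. Suppose one of the following holds: (1) $\Delta(G)=11$ and $e(G)=12+k$ for some $1\le k\le 8$; (2) $\Delta(G)=10$ and $e(G)=12+k$ for some $4\le k\le 8$; (3) $\Delta(G)=9$ and $e(G)=12+k$ for some $7\le k\le 8$. Then $R(G)>\sqrt{11}+\frac{2(k+1)}{12\sqrt{11}}$.
   Context: All graphs are finite and simple; $e(G)$ is the number of edges and $\Delta(G)$ the maximum degree. For a vertex $u$, $d(u)$ is its degree. The Randić index is $R(G)=\sum_{\{u,v\}\in E(G)} \frac{1}{\sqrt{d(u)d(v)}}$. *)

theory Defs
  imports Complex_Main
begin

definition simple_graph :: "'a set \<Rightarrow> 'a set set \<Rightarrow> bool" where
  "simple_graph V E \<longleftrightarrow> finite V \<and> (\<forall>e\<in>E. e \<subseteq> V \<and> card e = 2)"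

definition degree :: "'a set set \<Rightarrow> 'a \<Rightarrow> nat" where
  "degree E u = card {e\<in>E. u \<in> e}"

definition max_degree :: "'a set \<Rightarrow> 'a set set \<Rightarrow> nat" where
  "max_degree V E = Max (degree E ` V)"

definition adj :: "'a set set \<Rightarrow> 'a \<Rightarrow> 'a \<Rightarrow> bool" where
  "adj E u v \<longleftrightarrow> {u, v} \<in> E"

definition connected_graph :: "'a set \<Rightarrow> 'a set set \<Rightarrow> bool" where
  "connected_graph V E \<longleftrightarrow> V \<noteq> {} \<and> (\<forall>u\<in>V. \<forall>v\<in>V. (adj E)\<^sup>*\<^sup>* u v)"

definition randic_index :: "'a set set \<Rightarrow> real" where
  "randic_index E = (\<Sum>e\<in>E. 1 / sqrt (\<Prod>u\<in>e. real (degree E u)))"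

end

theory Submission
  imports Defs
begin

text \<open>
  A weighting argument in the spirit of LP duality. Fix a vertex \<open>u\<close> of maximum degree and give
  it weight \<open>\<gamma>\<close>; give every other vertex \<open>x\<close> weight \<open>\<alpha>/d(x) + \<beta>\<close>. If on every edge the two
  endpoint weights add up to at most \<open>1/\<surd>(d(x)d(y))\<close>, then summing over edges and
  regrouping by vertices gives \<open>R(G) \<ge> \<gamma> d(u) + (n-1)\<alpha> + \<beta>(2m - d(u))\<close>. The edge condition
  only involves pairs of degrees in \<open>{1..\<Delta>'}\<close>, where \<open>\<Delta>'\<close> bounds the degrees off \<open>u\<close>, so for
  suitable constants it is a finite check; the resulting linear bound in \<open>m = 12 + k\<close> beats
  \<open>\<surd>11 + 2(k+1)/(12\<surd>11)\<close>. When \<open>\<Delta> = 11\<close>, the bound \<open>d(u) + d(v) \<le> m + 1\<close> together with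
  \<open>k \<le> 8\<close> keeps all other degrees at most 10; this is also the only case that needs a lower
  bound on \<open>k\<close>.
\<close>

lemma simple_graph_finite_edges: "simple_graph V E \<Longrightarrow> finite E"
  unfolding simple_graph_def by (meson PowI finite_Pow_iff finite_subset subsetI)

lemma simple_graph_edgeE:
  assumes "simple_graph V E" "e \<in> E"
  obtains x y where "e = {x, y}" "x \<noteq> y" "x \<in> V" "y \<in> V"
  using assms unfolding simple_graph_def by (metis card_2_iff insert_subset)

lemma sum_weighted_degree_eq_sum_edges:
  assumes G: "simple_graph V E"
  shows "(\<Sum>x\<in>V. f x * real (degree E x)) = (\<Sum>e\<in>E. \<Sum>x\<in>e. f x)"
proof -
  have fV: "finite V" using G unfolding simple_graph_def by blast
  have fE: "finite E" using simple_graph_finite_edges[OF G] .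
  have "(\<Sum>x\<in>V. f x * real (degree E x)) = (\<Sum>x\<in>V. \<Sum>e\<in>E. if x \<in> e then f x else 0)"
    using fE by (simp add: sum.inter_filter[symmetric] degree_def mult.commute)
  also have "\<dots> = (\<Sum>e\<in>E. \<Sum>x\<in>V. if x \<in> e then f x else 0)"
    by (rule sum.swap)
  also have "\<dots> = (\<Sum>e\<in>E. \<Sum>x\<in>e. f x)"
  proof (rule sum.cong)
    fix e assume "e \<in> E"
    then have "V \<inter> e = e" using G unfolding simple_graph_def by blast
    then show "(\<Sum>x\<in>V. if x \<in> e then f x else 0) = (\<Sum>x\<in>e. f x)"
      using fV by (simp add: sum.If_cases)
  qed simp
  finally show ?thesis .
qed

lemma sum_degree_eq_twice_card_edges:
  assumes G: "simple_graph V E"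
  shows "(\<Sum>x\<in>V. real (degree E x)) = 2 * real (card E)"
proof -
  have "(\<Sum>x\<in>V. real (degree E x)) = (\<Sum>e\<in>E. \<Sum>x\<in>e. (1::real))"
    using sum_weighted_degree_eq_sum_edges[OF G, of "\<lambda>_. 1"] by simp
  also have "\<dots> = (\<Sum>e\<in>E. 2)"
    using G unfolding simple_graph_def by (intro sum.cong) auto
  finally show ?thesis by simp
qed

lemma connected_graph_degree_pos:
  assumes G: "simple_graph V E" and conn: "connected_graph V E" and "card V \<ge> 2" and v: "v \<in> V"
  shows "degree E v \<ge> 1"
proof -
  have "card (V - {v}) \<noteq> 0" using \<open>card V \<ge> 2\<close> v by simp
  then have "V - {v} \<noteq> {}" by force
  then obtain w where w: "w \<in> V" "w \<noteq> v" by blast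
  have "(adj E)\<^sup>*\<^sup>* v w" using conn v w(1) unfolding connected_graph_def by blast
  then obtain x where "adj E v x"
    using w(2) by (metis converse_rtranclpE)
  then have "{e\<in>E. v \<in> e} \<noteq> {}" unfolding adj_def by blast
  moreover have "finite {e\<in>E. v \<in> e}" using simple_graph_finite_edges[OF G] by simp
  ultimately show ?thesis unfolding degree_def by (simp add: Suc_le_eq card_gt_0_iff)
qed

text \<open>Two distinct vertices share at most one edge.\<close>
lemma degree_add_degree_le:
  assumes G: "simple_graph V E" and "u \<noteq> v"
  shows "degree E u + degree E v \<le> card E + 1"
proof -
  let ?A = "{e\<in>E. u \<in> e}" and ?B = "{e\<in>E. v \<in> e}"
  have fE: "finite E" using simple_graph_finite_edges[OF G] .
  have "?A \<inter> ?B \<subseteq> {{u, v}}"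
  proof
    fix e assume e: "e \<in> ?A \<inter> ?B"
    then obtain x y where "e = {x, y}" using simple_graph_edgeE[OF G] by blast
    then show "e \<in> {{u, v}}" using e \<open>u \<noteq> v\<close> by auto
  qed
  then have "card (?A \<inter> ?B) \<le> 1" using card_mono[of "{{u, v}}"] by fastforce
  moreover have "card (?A \<union> ?B) \<le> card E" using fE by (intro card_mono) auto
  moreover have "card ?A + card ?B = card (?A \<union> ?B) + card (?A \<inter> ?B)"
    using fE by (intro card_Un_Int) auto
  ultimately show ?thesis unfolding degree_def by linarith
qed

lemma max_degree_attained:
  assumes "finite V" "V \<noteq> {}"
  obtains u where "u \<in> V" "degree E u = max_degree V E" "\<And>v. v \<in> V \<Longrightarrow> degree E v \<le> degree E u"
proof -
  have fin: "finite (degree E ` V)" "degree E ` V \<noteq> {}" using assms by auto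
  obtain u where u: "u \<in> V" "degree E u = max_degree V E"
    using Max_in[OF fin] unfolding max_degree_def by auto
  moreover have "degree E v \<le> degree E u" if "v \<in> V" for v
    using Max_ge[OF fin(1)] that u(2) unfolding max_degree_def by auto
  ultimately show thesis using that by blast
qed

lemma randic_index_ge_weighted_degree_sum:
  assumes G: "simple_graph V E"
    and edge: "\<And>e. e \<in> E \<Longrightarrow> (\<Sum>x\<in>e. w x) \<le> 1 / sqrt (\<Prod>x\<in>e. real (degree E x))"
  shows "(\<Sum>x\<in>V. w x * real (degree E x)) \<le> randic_index E"
  unfolding sum_weighted_degree_eq_sum_edges[OF G] randic_index_def
  using edge by (rule sum_mono)

lemma divide_le_inverse_sqrt:
  fixes c p :: real
  assumes "0 \<le> c" "c\<^sup>2 \<le> p" "0 < p"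
  shows "c / p \<le> 1 / sqrt p"
proof -
  have "c / p \<le> sqrt p / p"
    using real_le_rsqrt[OF assms(2)] assms(3) by (simp add: divide_right_mono)
  also have "\<dots> = 1 / sqrt p"
    using assms(3) by (simp add: field_simps)
  finally show ?thesis .
qed

lemma pair_weight_le_inverse_sqrt:
  fixes a b \<alpha> \<beta> :: real
  assumes "0 < a" "0 < b" "0 \<le> \<alpha>" "0 \<le> \<beta>" "(\<alpha> * (a + b) + 2 * \<beta> * a * b)\<^sup>2 \<le> a * b"
  shows "(\<alpha> / a + \<beta>) + (\<alpha> / b + \<beta>) \<le> 1 / sqrt (a * b)"
proof -
  have "(\<alpha> / a + \<beta>) + (\<alpha> / b + \<beta>) = (\<alpha> * (a + b) + 2 * \<beta> * a * b) / (a * b)"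
    using assms(1,2) by (simp add: field_simps)
  also have "\<dots> \<le> 1 / sqrt (a * b)"
    using assms by (intro divide_le_inverse_sqrt) auto
  finally show ?thesis .
qed

lemma hub_pair_weight_le_inverse_sqrt:
  fixes a D \<alpha> \<beta> \<gamma> :: real
  assumes "0 < a" "0 < D" "0 \<le> \<alpha>" "0 \<le> \<beta>" "0 \<le> \<gamma>" "D * (\<alpha> + (\<beta> + \<gamma>) * a)\<^sup>2 \<le> a"
  shows "\<gamma> + (\<alpha> / a + \<beta>) \<le> 1 / sqrt (D * a)"
proof -
  have "\<gamma> + (\<alpha> / a + \<beta>) = (\<alpha> + (\<beta> + \<gamma>) * a) * D / (D * a)"
    using assms(1,2) by (simp add: field_simps)
  also have "\<dots> \<le> 1 / sqrt (D * a)"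
  proof (rule divide_le_inverse_sqrt)
    have "((\<alpha> + (\<beta> + \<gamma>) * a) * D)\<^sup>2 = D * (D * (\<alpha> + (\<beta> + \<gamma>) * a)\<^sup>2)"
      by (simp add: power2_eq_square)
    also have "\<dots> \<le> D * a" using assms(2,6) by simp
    finally show "((\<alpha> + (\<beta> + \<gamma>) * a) * D)\<^sup>2 \<le> D * a" .
  qed (use assms in auto)
  finally show ?thesis .
qed

text \<open>The weight of \<open>x \<noteq> u\<close> is chosen so that \<open>x\<close> contributes exactly \<open>\<alpha> + \<beta> d(x)\<close> to the weighted degree sum.\<close>
definition hub_weight :: "'a set set \<Rightarrow> 'a \<Rightarrow> real \<Rightarrow> real \<Rightarrow> real \<Rightarrow> 'a \<Rightarrow> real" where
  "hub_weight E u \<alpha> \<beta> \<gamma> x = (if x = u then \<gamma> else \<alpha> / real (degree E x) + \<beta>)"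

lemma sum_hub_weight_degree_eq:
  assumes G: "simple_graph V E" and u: "u \<in> V"
    and pos: "\<And>v. v \<in> V \<Longrightarrow> 1 \<le> degree E v"
  shows "(\<Sum>x\<in>V. hub_weight E u \<alpha> \<beta> \<gamma> x * real (degree E x))
    = real (degree E u) * \<gamma> + (real (card V) - 1) * \<alpha> + \<beta> * (2 * real (card E) - real (degree E u))"
proof -
  have fV: "finite V" using G unfolding simple_graph_def by blast
  have "(\<Sum>x\<in>V. hub_weight E u \<alpha> \<beta> \<gamma> x * real (degree E x))
      = \<gamma> * real (degree E u) + (\<Sum>x\<in>V - {u}. hub_weight E u \<alpha> \<beta> \<gamma> x * real (degree E x))"
    using fV u by (simp add: sum.remove hub_weight_def)
  also have "(\<Sum>x\<in>V - {u}. hub_weight E u \<alpha> \<beta> \<gamma> x * real (degree E x))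
      = (\<Sum>x\<in>V - {u}. \<alpha> + \<beta> * real (degree E x))"
    using pos by (intro sum.cong) (auto simp: hub_weight_def field_simps Suc_le_eq)
  also have "\<dots> = real (card (V - {u})) * \<alpha> + \<beta> * (\<Sum>x\<in>V - {u}. real (degree E x))"
    by (simp add: sum.distrib sum_distrib_left)
  also have "real (card (V - {u})) = real (card V) - 1"
    using fV u card_gt_0_iff[of V] by (auto simp: of_nat_diff Suc_le_eq)
  also have "(\<Sum>x\<in>V - {u}. real (degree E x)) = 2 * real (card E) - real (degree E u)"
    using fV u sum_degree_eq_twice_card_edges[OF G] by (simp add: sum.remove)
  finally show ?thesis by simp
qed

lemma hub_weight_edge_le:
  fixes \<alpha> \<beta> \<gamma> :: real and M :: nat
  assumes G: "simple_graph V E" and u: "u \<in> V" and e: "e \<in> E"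
    and pos: "\<And>v. v \<in> V \<Longrightarrow> 1 \<le> degree E v"
    and bnd: "\<And>v. v \<in> V \<Longrightarrow> v \<noteq> u \<Longrightarrow> degree E v \<le> M"
    and "0 \<le> \<alpha>" "0 \<le> \<beta>" "0 \<le> \<gamma>"
    and pair: "\<And>a b :: nat. 1 \<le> a \<Longrightarrow> a \<le> M \<Longrightarrow> 1 \<le> b \<Longrightarrow> b \<le> M \<Longrightarrow>
       (\<alpha> * (real a + real b) + 2 * \<beta> * real a * real b)\<^sup>2 \<le> real a * real b"
    and hub: "\<And>a :: nat. 1 \<le> a \<Longrightarrow> a \<le> M \<Longrightarrow>
       real (degree E u) * (\<alpha> + (\<beta> + \<gamma>) * real a)\<^sup>2 \<le> real a"
  shows "(\<Sum>x\<in>e. hub_weight E u \<alpha> \<beta> \<gamma> x) \<le> 1 / sqrt (\<Prod>x\<in>e. real (degree E x))"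
proof -
  have deg_pos: "0 < real (degree E v)" if "v \<in> V" for v using pos[OF that] by simp
  obtain x y where xy: "e = {x, y}" "x \<noteq> y" "x \<in> V" "y \<in> V"
    using simple_graph_edgeE[OF G e] .
  consider "x \<noteq> u" "y \<noteq> u" | z where "e = {u, z}" "z \<noteq> u" "z \<in> V"
    using xy by (metis insert_commute)
  then show ?thesis
  proof cases
    case 1
    have "(\<alpha> / real (degree E x) + \<beta>) + (\<alpha> / real (degree E y) + \<beta>)
        \<le> 1 / sqrt (real (degree E x) * real (degree E y))"
      by (intro pair_weight_le_inverse_sqrt pair) (use xy 1 pos bnd deg_pos assms(6,7) in auto)
    then show ?thesis using xy 1 by (simp add: hub_weight_def)
  next
    case 2
    have "\<gamma> + (\<alpha> / real (degree E z) + \<beta>) \<le> 1 / sqrt (real (degree E u) * real (degree E z))"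
      by (intro hub_pair_weight_le_inverse_sqrt hub) (use 2 u pos bnd deg_pos assms(6-8) in auto)
    then show ?thesis using 2 by (simp add: hub_weight_def)
  qed
qed

lemma randic_index_ge_hub_bound:
  fixes \<alpha> \<beta> \<gamma> :: real and M :: nat
  assumes G: "simple_graph V E" and u: "u \<in> V"
    and pos: "\<And>v. v \<in> V \<Longrightarrow> 1 \<le> degree E v"
    and bnd: "\<And>v. v \<in> V \<Longrightarrow> v \<noteq> u \<Longrightarrow> degree E v \<le> M"
    and "0 \<le> \<alpha>" "0 \<le> \<beta>" "0 \<le> \<gamma>"
    and pair: "\<And>a b :: nat. 1 \<le> a \<Longrightarrow> a \<le> M \<Longrightarrow> 1 \<le> b \<Longrightarrow> b \<le> M \<Longrightarrow>
       (\<alpha> * (real a + real b) + 2 * \<beta> * real a * real b)\<^sup>2 \<le> real a * real b"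
    and hub: "\<And>a :: nat. 1 \<le> a \<Longrightarrow> a \<le> M \<Longrightarrow>
       real (degree E u) * (\<alpha> + (\<beta> + \<gamma>) * real a)\<^sup>2 \<le> real a"
  shows "real (degree E u) * \<gamma> + (real (card V) - 1) * \<alpha>
           + \<beta> * (2 * real (card E) - real (degree E u)) \<le> randic_index E"
proof -
  have "(\<Sum>x\<in>V. hub_weight E u \<alpha> \<beta> \<gamma> x * real (degree E x)) \<le> randic_index E"
    by (rule randic_index_ge_weighted_degree_sum[OF G hub_weight_edge_le[OF G u _ pos bnd assms(5-7) pair hub]])
  then show ?thesis by (simp only: sum_hub_weight_degree_eq[OF G u pos])
qed

lemma nat_between_1_10_cases:
  "1 \<le> (a::nat) \<Longrightarrow> a \<le> 10 \<Longrightarrow>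
    a = 1 \<or> a = 2 \<or> a = 3 \<or> a = 4 \<or> a = 5 \<or> a = 6 \<or> a = 7 \<or> a = 8 \<or> a = 9 \<or> a = 10"
  by arith

lemma sqrt_11_bound_lt_linear:
  "sqrt 11 + 2 * (real k + 1) / (12 * sqrt 11) < 33167 / 10000 + 5000 / 99498 * (real k + 1)"
proof -
  have lower: "33166 / 10000 < sqrt 11" by (rule real_less_rsqrt) (simp add: power2_eq_square)
  have "sqrt 11 < sqrt ((33167 / 10000)\<^sup>2)" by (simp add: power2_eq_square)
  then have upper: "sqrt 11 < 33167 / 10000" by simp
  have "2 * (real k + 1) / (12 * sqrt 11) \<le> 2 * (real k + 1) / (12 * (33166 / 10000))"
    using lower by (intro divide_left_mono) auto
  also have "\<dots> = 5000 / 99498 * (real k + 1)" by simp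
  finally show ?thesis using upper by linarith
qed

lemma pair_condition_11:
  "1 \<le> (a::nat) \<Longrightarrow> a \<le> 10 \<Longrightarrow> 1 \<le> (b::nat) \<Longrightarrow> b \<le> 10 \<Longrightarrow>
    (229/1000 * (real a + real b) + 2 * (27/1000) * real a * real b)\<^sup>2 \<le> real a * real b"
  apply (drule nat_between_1_10_cases, simp)+
  apply (elim disjE; simp add: power2_eq_square)
  done

lemma hub_condition_11:
  "1 \<le> (a::nat) \<Longrightarrow> a \<le> 10 \<Longrightarrow> 11 * (229/1000 + (27/1000 + 45/1000) * real a)\<^sup>2 \<le> real a"
  apply (drule nat_between_1_10_cases, simp)
  apply (elim disjE; simp add: power2_eq_square)
  done

lemma randic_index_gt_bound_hub_11:
  assumes G: "simple_graph V E" and "card V = 12" and "card E = 12 + k" and "1 \<le> k"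
    and u: "u \<in> V" "degree E u = 11"
    and pos: "\<And>v. v \<in> V \<Longrightarrow> 1 \<le> degree E v"
    and bnd: "\<And>v. v \<in> V \<Longrightarrow> v \<noteq> u \<Longrightarrow> degree E v \<le> 10"
  shows "sqrt 11 + 2 * (real k + 1) / (12 * sqrt 11) < randic_index E"
proof -
  have "real (degree E u) * (45/1000) + (real (card V) - 1) * (229/1000)
      + 27/1000 * (2 * real (card E) - real (degree E u)) \<le> randic_index E"
    by (rule randic_index_ge_hub_bound[OF G u(1) pos bnd])
      (use pair_condition_11 hub_condition_11 u(2) in auto)
  then have "33167 / 10000 + 5000 / 99498 * (real k + 1) < randic_index E"
    using assms by (simp add: ring_distribs)
  with sqrt_11_bound_lt_linear[of k] show ?thesis by linarith
qed

lemma pair_condition_10: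
  "1 \<le> (a::nat) \<Longrightarrow> a \<le> 10 \<Longrightarrow> 1 \<le> (b::nat) \<Longrightarrow> b \<le> 10 \<Longrightarrow>
    (24/100 * (real a + real b) + 2 * (26/1000) * real a * real b)\<^sup>2 \<le> real a * real b"
  apply (drule nat_between_1_10_cases, simp)+
  apply (elim disjE; simp add: power2_eq_square)
  done

lemma hub_condition_10:
  "1 \<le> (a::nat) \<Longrightarrow> a \<le> 10 \<Longrightarrow> 10 * (24/100 + (26/1000 + 5/100) * real a)\<^sup>2 \<le> real a"
  apply (drule nat_between_1_10_cases, simp)
  apply (elim disjE; simp add: power2_eq_square)
  done

lemma randic_index_gt_bound_hub_10:
  assumes G: "simple_graph V E" and "card V = 12" and "card E = 12 + k"
    and u: "u \<in> V" "degree E u = 10"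
    and pos: "\<And>v. v \<in> V \<Longrightarrow> 1 \<le> degree E v"
    and bnd: "\<And>v. v \<in> V \<Longrightarrow> v \<noteq> u \<Longrightarrow> degree E v \<le> 10"
  shows "sqrt 11 + 2 * (real k + 1) / (12 * sqrt 11) < randic_index E"
proof -
  have "real (degree E u) * (5/100) + (real (card V) - 1) * (24/100)
      + 26/1000 * (2 * real (card E) - real (degree E u)) \<le> randic_index E"
    by (rule randic_index_ge_hub_bound[OF G u(1) pos bnd])
      (use pair_condition_10 hub_condition_10 u(2) in auto)
  then have "33167 / 10000 + 5000 / 99498 * (real k + 1) < randic_index E"
    using assms by (simp add: ring_distribs)
  with sqrt_11_bound_lt_linear[of k] show ?thesis by linarith
qed

lemma pair_condition_9:
  "1 \<le> (a::nat) \<Longrightarrow> a \<le> 9 \<Longrightarrow> 1 \<le> (b::nat) \<Longrightarrow> b \<le> 9 \<Longrightarrow>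
    (1/4 * (real a + real b) + 2 * (1/36) * real a * real b)\<^sup>2 \<le> real a * real b"
  apply (drule nat_between_1_10_cases, simp)+
  apply (elim disjE; simp add: power2_eq_square)
  done

lemma hub_condition_9:
  "1 \<le> (a::nat) \<Longrightarrow> a \<le> 9 \<Longrightarrow> 9 * (1/4 + (1/36 + 1/18) * real a)\<^sup>2 \<le> real a"
  apply (drule nat_between_1_10_cases, simp)
  apply (elim disjE; simp add: power2_eq_square)
  done

lemma randic_index_gt_bound_hub_9:
  assumes G: "simple_graph V E" and "card V = 12" and "card E = 12 + k"
    and u: "u \<in> V" "degree E u = 9"
    and pos: "\<And>v. v \<in> V \<Longrightarrow> 1 \<le> degree E v"
    and bnd: "\<And>v. v \<in> V \<Longrightarrow> v \<noteq> u \<Longrightarrow> degree E v \<le> 9"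
  shows "sqrt 11 + 2 * (real k + 1) / (12 * sqrt 11) < randic_index E"
proof -
  have "real (degree E u) * (1/18) + (real (card V) - 1) * (1/4)
      + 1/36 * (2 * real (card E) - real (degree E u)) \<le> randic_index E"
    by (rule randic_index_ge_hub_bound[OF G u(1) pos bnd])
      (use pair_condition_9 hub_condition_9 u(2) in auto)
  then have "33167 / 10000 + 5000 / 99498 * (real k + 1) < randic_index E"
    using assms by (simp add: ring_distribs)
  with sqrt_11_bound_lt_linear[of k] show ?thesis by linarith
qed

theorem lemma3p8:
  fixes V :: "'a set" and E :: "'a set set" and k :: nat
  assumes "simple_graph V E"
    and "connected_graph V E"
    and "card V = 12"
    and "(max_degree V E = 11 \<and> card E = 12 + k \<and> 1 \<le> k \<and> k \<le> 8)
       \<or> (max_degree V E = 10 \<and> card E = 12 + k \<and> 4 \<le> k \<and> k \<le> 8)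
       \<or> (max_degree V E = 9 \<and> card E = 12 + k \<and> 7 \<le> k \<and> k \<le> 8)"
  shows "randic_index E > sqrt 11 + 2 * (real k + 1) / (12 * sqrt 11)"
proof -
  have "finite V" "V \<noteq> {}" using assms(1,3) unfolding simple_graph_def by auto
  then obtain u where u: "u \<in> V" "degree E u = max_degree V E"
    and le_u: "\<And>v. v \<in> V \<Longrightarrow> degree E v \<le> degree E u"
    using max_degree_attained[where E = E] by blast
  have pos: "\<And>v. v \<in> V \<Longrightarrow> 1 \<le> degree E v"
    using connected_graph_degree_pos[OF assms(1,2)] assms(3) by simp
  from assms(4) consider
      "degree E u = 11" "card E = 12 + k" "1 \<le> k" "k \<le> 8"
    | "degree E u = 10" "card E = 12 + k"
    | "degree E u = 9" "card E = 12 + k"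
    using u(2) by auto
  then show ?thesis
  proof cases
    case 1
    then have "degree E v \<le> 10" if "v \<in> V" "v \<noteq> u" for v
      using degree_add_degree_le[OF assms(1), of u v] that by auto
    then show ?thesis using randic_index_gt_bound_hub_11[OF assms(1,3) 1(2,3) u(1) 1(1) pos] by blast
  next
    case 2
    have "degree E v \<le> 10" if "v \<in> V" for v using le_u[OF that] 2 by simp
    then show ?thesis using randic_index_gt_bound_hub_10[OF assms(1,3) 2(2) u(1) 2(1) pos] by blast
  next
    case 3
    have "degree E v \<le> 9" if "v \<in> V" for v using le_u[OF that] 3 by simp
    then show ?thesis using randic_index_gt_bound_hub_9[OF assms(1,3) 3(2) u(1) 3(1) pos] by blast
  qed
qed

end
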